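(* Let $\mathcal{H}$ be a Hilbert space and $T$ a (possibly unbounded) self-adjoint operator on $\mathcal{H}$ with domain $D$. Assume there is an orthonormal basis $\{f_n\}_{n\in\mathbb{N}}$ of $\mathcal{H}$ with $f_n\in D$ and sequences $a_n>0$, $b_n\in\mathbb{C}$, $c_n\in\mathbb{R}$ such that $$Tf_n=a_nf_{n+2}+b_nf_{n+1}+c_nf_n+\overline{b_{n-1}}f_{n-1}+a_{n-2}f_{n-2}\qquad(n\in\mathbb{N},\ f_{-1}=f_{-2}=0).$$ Assume the spectrum is $\sigma(T)=\Omega_1\cup\Omega_2$ (disjoint), let $\sigma$ be a positive Borel measure on $\Omega_1$, $\rho$ a positive Borel measure on $\Omega_2$, $V:\Omega_2\to M_2(\mathbb{C})$ measurable with $V(\lambda)$ positive semi-definite $\rho$-a.e., and let $L^2(\mathcal{V})$ be the Hilbert space of functions $f$ with $f|_{\Omega_1}:\Omega_1\to\mathbb{C}$, $f|_{\Omega_2}:\Omega_2\to\mathbb{C}^2$ and inner product $\langle f,g\rangle=\int_{\Omega_1}f\bar g\,d\sigma+\int_{\Omega_2}g(\lambda)^\ast V(\lambda)f(\lambda)\,d\rho(\lambda)$ (modulo null functions). Assume there is a unitary $U:\mathcal{H}\to L^2(\mathcal{V})$ with $UT=MU$, $M$ multiplication by $\lambda$. Define $2\times2$ matrix polynomials $P_n$ by $P_{-1}=0$, $P_0=I$ and $\lambda P_n(\lambda)=A_nP_{n+1}(\lambda)+B_nP_n(\lambda)+A_{n-1}^\ast P_{n-1}(\lambda)$, where $$A_n=\begin{pmatrix}a_{2n}&0\\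 b_{2n+1}&a_{2n+1}\end{pmatrix},\qquad B_n=\begin{pmatrix}c_{2n}&b_{2n}\\ \overline{b_{2n}}&c_{2n+1}\end{pmatrix}.$$ Then for all $n,m\in\mathbb{N}$, $$\int_{\Omega_1}P_n(\lambda)W_1(\lambda)P_m(\lambda)^\ast d\sigma(\lambda)+\int_{\Omega_2}P_n(\lambda)W_2(\lambda)P_m(\lambda)^\ast d\rho(\lambda)=\delta_{nm}I,$$ where, $\sigma$-a.e. on $\Omega_1$, $W_1(\lambda)=\begin{pmatrix}|Uf_0(\lambda)|^2&Uf_0(\lambda)\overline{Uf_1(\lambda)}\\ \overline{Uf_0(\lambda)}Uf_1(\lambda)&|Uf_1(\lambda)|^2\end{pmatrix}$, and, $\rho$-a.e. on $\Omega_2$, $W_2(\lambda)_{i,j}=(Uf_{j-1}(\lambda))^\ast V(\lambda)\,Uf_{i-1}(\lambda)$ for $i,j\in\{1,2\}$.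
   Context: For $\lambda\in\Omega_2$, $Uf(\lambda)\in\mathbb{C}^2$ is a column vector and $(\cdot)^\ast$ is the conjugate transpose; for a matrix polynomial $P$ and real $\lambda$, $P(\lambda)^\ast$ is the conjugate transpose. *)

theory Defs
  imports "HOL-Analysis.Analysis"
begin

class complex_hilbert = ab_group_add +
  fixes scaleC :: "complex \<Rightarrow> 'a \<Rightarrow> 'a" (infixr \<open>*\<^sub>C\<close> 75)
    and cinner :: "'a \<Rightarrow> 'a \<Rightarrow> complex"
  assumes scaleC_add_right: "scaleC c (x + y) = scaleC c x + scaleC c y"
    and scaleC_add_left: "scaleC (c + d) x = scaleC c x + scaleC d x"
    and scaleC_scaleC: "scaleC c (scaleC d x) = scaleC (c * d) x"
    and scaleC_one: "scaleC 1 x = x"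
    and cinner_add_left: "cinner (x + y) z = cinner x z + cinner y z"
    and cinner_scaleC_left: "cinner (scaleC c x) y = c * cinner x y"
    and cinner_commute: "cinner y x = cnj (cinner x y)"
    and cinner_nonneg: "Im (cinner x x) = 0 \<and> 0 \<le> Re (cinner x x)"
    and cinner_eq_zero_iff: "cinner x x = 0 \<longleftrightarrow> x = 0"
    and cinner_complete:
      "(\<forall>e>0. \<exists>N. \<forall>m\<ge>N. \<forall>n\<ge>N. sqrt (Re (cinner (X m - X n) (X m - X n))) < e)
         \<Longrightarrow> \<exists>l. (\<lambda>n. sqrt (Re (cinner (X n - l) (X n - l)))) \<longlonglongrightarrow> 0"

definition cnorm :: "'a::complex_hilbert \<Rightarrow> real" where
  "cnorm x = sqrt (Re (cinner x x))"

definition orthonormal_basis :: "(nat \<Rightarrow> 'a::complex_hilbert) \<Rightarrow> bool" where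
  "orthonormal_basis f \<longleftrightarrow>
     (\<forall>n m. cinner (f n) (f m) = (if n = m then 1 else 0)) \<and>
     (\<forall>x. (\<forall>n. cinner x (f n) = 0) \<longrightarrow> x = 0)"

definition densely_defined_linear :: "('a::complex_hilbert \<Rightarrow> 'a) \<Rightarrow> 'a set \<Rightarrow> bool" where
  "densely_defined_linear T D \<longleftrightarrow>
     0 \<in> D \<and> (\<forall>x\<in>D. \<forall>y\<in>D. x + y \<in> D) \<and> (\<forall>c. \<forall>x\<in>D. c *\<^sub>C x \<in> D) \<and>
     (\<forall>x\<in>D. \<forall>y\<in>D. T (x + y) = T x + T y) \<and> (\<forall>c. \<forall>x\<in>D. T (c *\<^sub>C x) = c *\<^sub>C T x) \<and>
     (\<forall>x. \<forall>e>0. \<exists>d\<in>D. cnorm (x - d) < e)"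

definition adjoint_domain :: "('a::complex_hilbert \<Rightarrow> 'a) \<Rightarrow> 'a set \<Rightarrow> 'a set" where
  "adjoint_domain T D = {y. \<exists>z. \<forall>x\<in>D. cinner (T x) y = cinner x z}"

definition self_adjoint :: "('a::complex_hilbert \<Rightarrow> 'a) \<Rightarrow> 'a set \<Rightarrow> bool" where
  "self_adjoint T D \<longleftrightarrow> densely_defined_linear T D \<and> adjoint_domain T D = D \<and>
     (\<forall>x\<in>D. \<forall>y\<in>D. cinner (T x) y = cinner x (T y))"

definition op_spectrum :: "('a::complex_hilbert \<Rightarrow> 'a) \<Rightarrow> 'a set \<Rightarrow> complex set" where
  "op_spectrum T D = {z. \<not> (bij_betw (\<lambda>x. T x - z *\<^sub>C x) D UNIV \<and>
       (\<exists>C. \<forall>x\<in>D. cnorm x \<le> C * cnorm (T x - z *\<^sub>C x)))}"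

type_synonym cmat2 = "complex^2^2"
type_synonym cvec2 = "complex^2"

definition mk2 :: "complex \<Rightarrow> complex \<Rightarrow> complex \<Rightarrow> complex \<Rightarrow> cmat2" where
  "mk2 p q r s = vector [vector [p, q], vector [r, s]]"

definition adj2 :: "cmat2 \<Rightarrow> cmat2" where
  "adj2 A = (\<chi> i j. cnj (A $ j $ i))"

definition hform :: "cvec2 \<Rightarrow> cmat2 \<Rightarrow> cvec2 \<Rightarrow> complex" where
  "hform v A w = (\<Sum>i\<in>UNIV. cnj (v $ i) * (A *v w) $ i)"

definition psd2 :: "cmat2 \<Rightarrow> bool" where
  "psd2 A \<longleftrightarrow> (\<forall>v. Im (hform v A v) = 0 \<and> 0 \<le> Re (hform v A v))"

text \<open>An element is a pair (g1, g2) with g1 the part on Omega_1 (scalar) and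
  g2 the part on Omega_2 (C^2-valued).  sigma lives on Omega_1, rho on Omega_2.\<close>
type_synonym l2v = "(real \<Rightarrow> complex) \<times> (real \<Rightarrow> cvec2)"

definition L2V_mem :: "real measure \<Rightarrow> real measure \<Rightarrow> (real \<Rightarrow> cmat2) \<Rightarrow> l2v \<Rightarrow> bool" where
  "L2V_mem \<sigma> \<rho> V g \<longleftrightarrow>
     fst g \<in> borel_measurable \<sigma> \<and> integrable \<sigma> (\<lambda>x. (cmod (fst g x))\<^sup>2) \<and>
     snd g \<in> borel_measurable \<rho> \<and> integrable \<rho> (\<lambda>x. hform (snd g x) (V x) (snd g x))"

definition L2V_inner :: "real measure \<Rightarrow> real measure \<Rightarrow> (real \<Rightarrow> cmat2) \<Rightarrow> l2v \<Rightarrow> l2v \<Rightarrow> complex" where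
  "L2V_inner \<sigma> \<rho> V f g =
     (\<integral>x. fst f x * cnj (fst g x) \<partial>\<sigma>) + (\<integral>x. hform (snd g x) (V x) (snd f x) \<partial>\<rho>)"

definition L2V_add :: "l2v \<Rightarrow> l2v \<Rightarrow> l2v" where
  "L2V_add f g = (\<lambda>x. fst f x + fst g x, \<lambda>x. snd f x + snd g x)"

definition L2V_scale :: "complex \<Rightarrow> l2v \<Rightarrow> l2v" where
  "L2V_scale c f = (\<lambda>x. c * fst f x, \<lambda>x. c *s snd f x)"

definition L2V_diff :: "l2v \<Rightarrow> l2v \<Rightarrow> l2v" where
  "L2V_diff f g = (\<lambda>x. fst f x - fst g x, \<lambda>x. snd f x - snd g x)"

text \<open>Equality in L^2(V), i.e. modulo null functions.\<close>
definition L2V_eq :: "real measure \<Rightarrow> real measure \<Rightarrow> (real \<Rightarrow> cmat2) \<Rightarrow> l2v \<Rightarrow> l2v \<Rightarrow> bool" where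
  "L2V_eq \<sigma> \<rho> V f g \<longleftrightarrow> L2V_inner \<sigma> \<rho> V (L2V_diff f g) (L2V_diff f g) = 0"

definition L2V_mult :: "l2v \<Rightarrow> l2v" where
  "L2V_mult f = (\<lambda>x. complex_of_real x * fst f x, \<lambda>x. complex_of_real x *s snd f x)"

definition unitary_to_L2V ::
  "real measure \<Rightarrow> real measure \<Rightarrow> (real \<Rightarrow> cmat2) \<Rightarrow> ('a::complex_hilbert \<Rightarrow> l2v) \<Rightarrow> bool" where
  "unitary_to_L2V \<sigma> \<rho> V U \<longleftrightarrow>
     (\<forall>x. L2V_mem \<sigma> \<rho> V (U x)) \<and>
     (\<forall>x y. L2V_eq \<sigma> \<rho> V (U (x + y)) (L2V_add (U x) (U y))) \<and>
     (\<forall>c x. L2V_eq \<sigma> \<rho> V (U (c *\<^sub>C x)) (L2V_scale c (U x))) \<and>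
     (\<forall>x y. L2V_inner \<sigma> \<rho> V (U x) (U y) = cinner x y) \<and>
     (\<forall>g. L2V_mem \<sigma> \<rho> V g \<longrightarrow> (\<exists>x. L2V_eq \<sigma> \<rho> V (U x) g))"

definition intertwines ::
  "real measure \<Rightarrow> real measure \<Rightarrow> (real \<Rightarrow> cmat2) \<Rightarrow> ('a::complex_hilbert \<Rightarrow> l2v)
     \<Rightarrow> ('a \<Rightarrow> 'a) \<Rightarrow> 'a set \<Rightarrow> bool" where
  "intertwines \<sigma> \<rho> V U T D \<longleftrightarrow>
     D = {x. L2V_mem \<sigma> \<rho> V (L2V_mult (U x))} \<and>
     (\<forall>x\<in>D. L2V_eq \<sigma> \<rho> V (U (T x)) (L2V_mult (U x)))"

definition Amat :: "(nat \<Rightarrow> real) \<Rightarrow> (nat \<Rightarrow> complex) \<Rightarrow> nat \<Rightarrow> cmat2" where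
  "Amat a b n = mk2 (of_real (a (2*n))) 0 (b (2*n+1)) (of_real (a (2*n+1)))"

definition Bmat :: "(nat \<Rightarrow> complex) \<Rightarrow> (nat \<Rightarrow> real) \<Rightarrow> nat \<Rightarrow> cmat2" where
  "Bmat b c n = mk2 (of_real (c (2*n))) (b (2*n)) (cnj (b (2*n))) (of_real (c (2*n+1)))"

definition matrix_orth_polys ::
  "(nat \<Rightarrow> real) \<Rightarrow> (nat \<Rightarrow> complex) \<Rightarrow> (nat \<Rightarrow> real) \<Rightarrow> (nat \<Rightarrow> real \<Rightarrow> cmat2) \<Rightarrow> bool" where
  "matrix_orth_polys a b c P \<longleftrightarrow>
     (\<forall>x. P 0 x = mat 1) \<and>
     (\<forall>n x. x *\<^sub>R P n x =
        Amat a b n ** P (Suc n) x + Bmat b c n ** P n x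
        + (if n = 0 then 0 else adj2 (Amat a b (n - 1)) ** P (n - 1) x))"

end

theory Submission
  imports Defs
begin

text \<open>Because \<open>U\<close> is linear and \<open>U T = M U\<close>, the coordinates \<open>s\<^sub>k = (U f\<^sub>k)(\<lambda>)\<close> satisfy,
  for almost every \<open>\<lambda>\<close>, the five-term recurrence
  \<open>\<lambda> s\<^sub>k = a\<^sub>k s\<^sub>k\<^sub>+\<^sub>2 + b\<^sub>k s\<^sub>k\<^sub>+\<^sub>1 + c\<^sub>k s\<^sub>k + b\<^sub>k\<^sub>-\<^sub>1\<^sup>* s\<^sub>k\<^sub>-\<^sub>1 + a\<^sub>k\<^sub>-\<^sub>2 s\<^sub>k\<^sub>-\<^sub>2\<close>.
  Grouped into the vectors \<open>(s\<^sub>2\<^sub>n, s\<^sub>2\<^sub>n\<^sub>+\<^sub>1)\<close> this is the three-term recurrence defining \<open>P\<^sub>n\<close>,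
  so \<open>(U f\<^sub>2\<^sub>n, U f\<^sub>2\<^sub>n\<^sub>+\<^sub>1) = P\<^sub>n(\<lambda>) (U f\<^sub>0, U f\<^sub>1)\<close>. Hence the entries of \<open>P\<^sub>n W P\<^sub>m\<^sup>*\<close> are the
  integrands of \<open>\<langle>U f\<^sub>k, U f\<^sub>l\<rangle>\<close> for \<open>k \<in> {2n, 2n+1}\<close>, \<open>l \<in> {2m, 2m+1}\<close>, and unitarity of \<open>U\<close>
  turns the orthonormality of the \<open>f\<^sub>k\<close> into the orthonormality of the \<open>P\<^sub>n\<close>.\<close>

lemma mk2_nth [simp]:
  "mk2 p q r s $ 1 $ 1 = p" "mk2 p q r s $ 1 $ 2 = q" "mk2 p q r s $ 2 $ 1 = r" "mk2 p q r s $ 2 $ 2 = s"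
  by (simp_all add: mk2_def)

lemma cmat2_eq_iff: "(A::cmat2) = B \<longleftrightarrow> A$1$1 = B$1$1 \<and> A$1$2 = B$1$2 \<and> A$2$1 = B$2$1 \<and> A$2$2 = B$2$2"
  by (auto simp: vec_eq_iff forall_2)

lemma cvec2_eq_iff: "(v::cvec2) = w \<longleftrightarrow> v$1 = w$1 \<and> v$2 = w$2"
  by (auto simp: vec_eq_iff forall_2)

lemma matrix_matrix_mult_nth2 [simp]: "((A::cmat2) ** B) $ i $ j = A$i$1 * B$1$j + A$i$2 * B$2$j"
  by (simp add: matrix_matrix_mult_def sum_2)

lemma matrix_vector_mult_nth2 [simp]: "((A::cmat2) *v v) $ i = A$i$1 * v$1 + A$i$2 * v$2"
  by (simp add: matrix_vector_mult_def sum_2)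

lemma adj2_nth [simp]: "adj2 A $ i $ j = cnj (A $ j $ i)"
  by (simp add: adj2_def)

lemma mat1_nth2 [simp]:
  "(mat 1 :: cmat2) $ 1 $ 1 = 1" "(mat 1 :: cmat2) $ 1 $ 2 = 0"
  "(mat 1 :: cmat2) $ 2 $ 1 = 0" "(mat 1 :: cmat2) $ 2 $ 2 = 1"
  by (simp_all add: mat_def)

lemma scaleR_cmat2_nth [simp]: "((x::real) *\<^sub>R (M::cmat2)) $ i $ j = complex_of_real x * M$i$j"
  by (simp only: vector_scaleR_component) (simp add: scaleR_conv_of_real)

lemma scaleR_matrix_vector_mult2: "((x::real) *\<^sub>R (M::cmat2)) *v v = complex_of_real x *s (M *v v)"
  by (simp add: cvec2_eq_iff algebra_simps del: vector_scaleR_component)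

lemma sum_axis_nth: "(\<Sum>i\<in>UNIV. axis i (x $ i)) = x"
  by (simp add: vec_eq_iff axis_def)

lemma bounded_linear_axis: "bounded_linear (axis i :: 'a::euclidean_space \<Rightarrow> 'a^'n)"
proof -
  have "linear (axis i :: 'a \<Rightarrow> 'a^'n)"
    by (rule linearI) (simp_all add: axis_def vec_eq_iff)
  then show ?thesis by (simp add: linear_conv_bounded_linear)
qed

lemma integrable_vec_componentwise:
  fixes F :: "'a \<Rightarrow> 'b::euclidean_space^'n"
  assumes "\<And>i. integrable M (\<lambda>x. F x $ i)"
  shows "integrable M F"
proof -
  have "integrable M (\<lambda>x. \<Sum>i\<in>UNIV. axis i (F x $ i))"
    by (intro Bochner_Integration.integrable_sum integrable_bounded_linear[OF bounded_linear_axis] assms)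
  then show ?thesis by (simp only: sum_axis_nth)
qed

lemma integral_vec_nth_nth:
  fixes F :: "'a \<Rightarrow> 'b::euclidean_space^'n^'m"
  assumes "integrable M F"
  shows "integral\<^sup>L M F $ i $ j = (\<integral>x. F x $ i $ j \<partial>M)"
  using integral_bounded_linear[OF bounded_linear_compose[OF bounded_linear_vec_nth bounded_linear_vec_nth] assms]
  by simp

lemma hform_expand:
  "hform v A w = cnj (v$1) * (A$1$1 * w$1 + A$1$2 * w$2) + cnj (v$2) * (A$2$1 * w$1 + A$2$2 * w$2)"
  by (simp add: hform_def sum_2)

lemma hform_add_right: "hform v A (w1 + w2) = hform v A w1 + hform v A w2"
  and hform_add_left: "hform (v1 + v2) A w = hform v1 A w + hform v2 A w"
  and hform_diff_right: "hform v A (w1 - w2) = hform v A w1 - hform v A w2"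
  and hform_diff_left: "hform (v1 - v2) A w = hform v1 A w - hform v2 A w"
  and hform_scale_right: "hform v A (c *s w) = c * hform v A w"
  and hform_scale_left: "hform (c *s v) A w = cnj c * hform v A w"
  by (simp_all add: hform_expand algebra_simps)

lemmas hform_linear_simps =
  hform_add_right hform_add_left hform_diff_right hform_diff_left hform_scale_right hform_scale_left

lemma psd2_hform_real: "psd2 A \<Longrightarrow> hform v A v = complex_of_real (Re (hform v A v))"
  and psd2_hform_nonneg: "psd2 A \<Longrightarrow> 0 \<le> Re (hform v A v)"
  by (simp_all add: psd2_def complex_eq_iff)

lemma psd2_norm_hform_self: "psd2 A \<Longrightarrow> cmod (hform v A v) = Re (hform v A v)"
  by (metis psd2_hform_real psd2_hform_nonneg norm_of_real abs_of_nonneg)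

lemma psd2_hform_commute:
  assumes "psd2 A" shows "hform w A v = cnj (hform v A w)"
proof -
  have h: "\<And>v. Im (hform v A v) = 0" using assms by (simp add: psd2_def)
  have e1: "Im (A$1$1) = 0" using h[of "vector [1,0]"] by (simp add: hform_expand)
  have e2: "Im (A$2$2) = 0" using h[of "vector [0,1]"] by (simp add: hform_expand)
  have e3: "Im (A$1$1 + A$1$2 + A$2$1 + A$2$2) = 0" using h[of "vector [1,1]"] by (simp add: hform_expand)
  have e4: "Im (A$1$1 + \<i> * A$1$2 - \<i> * A$2$1 + A$2$2) = 0" using h[of "vector [1,\<i>]"]
    by (simp add: hform_expand algebra_simps)
  have "A$2$1 = cnj (A$1$2)" using e1 e2 e3 e4 by (simp add: complex_eq_iff)
  moreover have "A$1$1 = cnj (A$1$1)" "A$2$2 = cnj (A$2$2)" using e1 e2 by (simp_all add: complex_eq_iff)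
  ultimately show ?thesis by (simp add: hform_expand algebra_simps)
qed

lemma linear_coeff_eq_0_if_nonneg:
  fixes b c :: real
  assumes "\<And>t. 0 \<le> b * t + c * t^2" shows "b = 0"
proof -
  have c: "0 \<le> c" using assms[of 1] assms[of "-1"] by simp
  define t where "t = - b / (c + 1)"
  have e: "(c + 1) * t = - b" using c unfolding t_def by simp
  have "(c + 1)^2 * (b * t + c * t^2) = b * (c + 1) * ((c + 1) * t) + c * ((c + 1) * t)^2"
    by (simp add: power2_eq_square algebra_simps)
  also have "\<dots> = - (b^2)" unfolding e by (simp add: power2_eq_square algebra_simps)
  finally have "- (b^2) \<ge> 0" using assms[of t] by (metis zero_le_mult_iff zero_le_power2)
  then show ?thesis by simp
qed

text \<open>A vector isotropic for a positive semi-definite form lies in its kernel: the quadratic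
  form is nonnegative along every line through it, so its linear term must vanish.\<close>
lemma psd2_hform_eq_0:
  assumes A: "psd2 A" and z: "hform v A v = 0" shows "hform w A v = 0"
proof -
  have Re_0: "Re (hform v A u) = 0" for u
  proof -
    have "0 \<le> (2 * Re (hform v A u)) * t + Re (hform u A u) * t^2" for t :: real
    proof -
      have "hform (v + complex_of_real t *s u) A (v + complex_of_real t *s u) =
          hform v A v + t * hform v A u + t * hform u A v + (t * t) * hform u A u"
        by (simp add: hform_linear_simps algebra_simps)
      then have "Re (hform (v + complex_of_real t *s u) A (v + complex_of_real t *s u)) =
          (2 * Re (hform v A u)) * t + Re (hform u A u) * t^2"
        unfolding psd2_hform_commute[OF A, of u v] using z by (simp add: power2_eq_square algebra_simps)
      then show ?thesis using psd2_hform_nonneg[OF A] by metis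
    qed
    then show ?thesis
      using linear_coeff_eq_0_if_nonneg[of "2 * Re (hform v A u)" "Re (hform u A u)"] by simp
  qed
  have "hform v A w = 0"
    using Re_0[of w] Re_0[of "\<i> *s w"] by (simp add: hform_scale_right complex_eq_iff)
  then show ?thesis using psd2_hform_commute[OF A, of w v] by simp
qed

lemma hform_parallelogram:
  "hform (v + w) A (v + w) + hform (v - w) A (v - w) = 2 * hform v A v + 2 * hform w A w"
  by (simp add: hform_linear_simps algebra_simps)

lemma psd2_hform_add_le:
  assumes "psd2 A"
  shows "Re (hform (v + w) A (v + w)) \<le> 2 * Re (hform v A v) + 2 * Re (hform w A w)"
    and "Re (hform (v - w) A (v - w)) \<le> 2 * Re (hform v A v) + 2 * Re (hform w A w)"
  using arg_cong[OF hform_parallelogram[of v w A], of Re]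
    psd2_hform_nonneg[OF assms, of "v - w"] psd2_hform_nonneg[OF assms, of "v + w"] by simp_all

lemma hform_polarization:
  "4 * hform w A v = hform (v + w) A (v + w) - hform (v - w) A (v - w)
     + \<i> * hform (v + \<i> *s w) A (v + \<i> *s w) - \<i> * hform (v - \<i> *s w) A (v - \<i> *s w)"
  by (simp add: hform_linear_simps algebra_simps)

lemma norm_polarization_le: "cmod (a - b + \<i> * c - \<i> * d) \<le> cmod a + cmod b + cmod c + cmod d"
proof -
  have "cmod (a - b + \<i> * c - \<i> * d) \<le> cmod (a - b + \<i> * c) + cmod (\<i> * d)" by (rule norm_triangle_ineq4)
  also have "cmod (a - b + \<i> * c) \<le> cmod (a - b) + cmod (\<i> * c)" by (rule norm_triangle_ineq)
  also have "cmod (a - b) \<le> cmod a + cmod b" by (rule norm_triangle_ineq4)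
  finally show ?thesis by (simp add: norm_mult)
qed

lemma psd2_norm_hform_le:
  assumes A: "psd2 A"
  shows "cmod (hform w A v) \<le> 2 * Re (hform v A v) + 2 * Re (hform w A w)"
proof -
  have i: "hform (\<i> *s w) A (\<i> *s w) = hform w A w" by (simp add: hform_linear_simps)
  have "4 * cmod (hform w A v) = cmod (4 * hform w A v)" by (simp add: norm_mult)
  also have "\<dots> \<le> cmod (hform (v + w) A (v + w)) + cmod (hform (v - w) A (v - w))
     + cmod (hform (v + \<i> *s w) A (v + \<i> *s w)) + cmod (hform (v - \<i> *s w) A (v - \<i> *s w))"
    unfolding hform_polarization by (rule norm_polarization_le)
  also have "\<dots> \<le> 4 * (2 * Re (hform v A v) + 2 * Re (hform w A w))"
    unfolding psd2_norm_hform_self[OF A] using psd2_hform_add_le[OF A, of v w] psd2_hform_add_le[OF A, of v "\<i> *s w"] i by simp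
  finally show ?thesis by simp
qed

definition pentadiagonal_action ::
    "('h::complex_hilbert \<Rightarrow> 'h) \<Rightarrow> (nat \<Rightarrow> 'h) \<Rightarrow> (nat \<Rightarrow> real) \<Rightarrow> (nat \<Rightarrow> complex) \<Rightarrow> (nat \<Rightarrow> real) \<Rightarrow> bool"
  where "pentadiagonal_action T f a b c \<longleftrightarrow> (\<forall>n. T (f n) =
     of_real (a n) *\<^sub>C f (n + 2) + b n *\<^sub>C f (n + 1) + of_real (c n) *\<^sub>C f n
     + (if n \<ge> 1 then cnj (b (n - 1)) *\<^sub>C f (n - 1) else 0)
     + (if n \<ge> 2 then of_real (a (n - 2)) *\<^sub>C f (n - 2) else 0))"

definition pentadiagonal_eigenseq ::
    "(nat \<Rightarrow> real) \<Rightarrow> (nat \<Rightarrow> complex) \<Rightarrow> (nat \<Rightarrow> real) \<Rightarrow> real \<Rightarrow> (nat \<Rightarrow> complex) \<Rightarrow> bool"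
  where "pentadiagonal_eigenseq a b c x s \<longleftrightarrow> (\<forall>k. complex_of_real x * s k =
     of_real (a k) * s (k + 2) + b k * s (k + 1) + of_real (c k) * s k
     + (if k \<ge> 1 then cnj (b (k - 1)) * s (k - 1) else 0)
     + (if k \<ge> 2 then of_real (a (k - 2)) * s (k - 2) else 0))"

text \<open>Row \<open>i\<close> of the \<open>n\<close>-th \<open>2\<times>2\<close> block corresponds to the index \<open>2 n + block_offset i\<close>.\<close>
definition block_offset :: "2 \<Rightarrow> nat" where
  "block_offset i = (if i = 1 then 0 else 1)"

lemma block_offset_simps [simp]: "block_offset 1 = 0" "block_offset 2 = 1"
  by (simp_all add: block_offset_def)

lemma block_index_eq_iff: "2 * n + block_offset i = 2 * m + block_offset j \<longleftrightarrow> n = m \<and> i = j"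
proof -
  have "i = 1 \<or> i = 2" "j = 1 \<or> j = 2" using exhaust_2 by auto
  then show ?thesis by (auto simp: block_offset_def; presburger)
qed

lemma matrix_orth_polys_rec:
  "matrix_orth_polys a b c P \<Longrightarrow> x *\<^sub>R P n x = Amat a b n ** P (Suc n) x + Bmat b c n ** P n x
     + (if n = 0 then 0 else adj2 (Amat a b (n - 1)) ** P (n - 1) x)"
  by (simp add: matrix_orth_polys_def)

lemma Amat_left_invertible:
  assumes "\<And>n. a n > 0"
  shows "\<exists>L. L ** Amat a b n = mat 1"
proof
  have "a (2*n) > 0" "a (2*n+1) > 0" using assms by blast+
  then show "mk2 (1 / of_real (a (2*n))) 0 (- b (2*n+1) / (of_real (a (2*n)) * of_real (a (2*n+1))))
      (1 / of_real (a (2*n+1))) ** Amat a b n = mat 1"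
    by (simp add: cmat2_eq_iff Amat_def field_simps)
qed

lemma Amat_mult_vec_inj:
  assumes "\<And>n. a n > 0" and "Amat a b n *v u = Amat a b n *v u'"
  shows "u = u'"
proof -
  obtain L where L: "L ** Amat a b n = mat 1" using Amat_left_invertible[of a] assms(1) by blast
  have "u = L *v (Amat a b n *v u)" by (simp add: matrix_vector_mul_assoc L)
  also have "\<dots> = u'" by (simp add: assms(2) matrix_vector_mul_assoc L)
  finally show ?thesis .
qed

definition block_vec :: "(nat \<Rightarrow> complex) \<Rightarrow> nat \<Rightarrow> cvec2" where
  "block_vec s n = vector [s (2 * n), s (2 * n + 1)]"

lemma block_vec_nth [simp]: "block_vec s n $ 1 = s (2 * n)" "block_vec s n $ 2 = s (2 * n + 1)"
  by (simp_all add: block_vec_def)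

lemma pentadiagonal_eigenseq_block_rec:
  assumes "pentadiagonal_eigenseq a b c x s"
  shows "complex_of_real x *s block_vec s n = Amat a b n *v block_vec s (Suc n) + Bmat b c n *v block_vec s n
      + (if n = 0 then 0 else adj2 (Amat a b (n - 1)) *v block_vec s (n - 1))"
proof (cases n)
  case 0
  show ?thesis using assms[unfolded pentadiagonal_eigenseq_def, rule_format, of 0]
      assms[unfolded pentadiagonal_eigenseq_def, rule_format, of 1] unfolding 0
    by (simp add: cvec2_eq_iff Amat_def Bmat_def algebra_simps)
next
  case (Suc m)
  have "2 * Suc m = Suc (Suc (2 * m))" by simp
  then show ?thesis using assms[unfolded pentadiagonal_eigenseq_def, rule_format, of "2*m+2"]
      assms[unfolded pentadiagonal_eigenseq_def, rule_format, of "2*m+3"] unfolding Suc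
    by (simp add: cvec2_eq_iff Amat_def Bmat_def algebra_simps mult_2 numeral_3_eq_3 numeral_2_eq_2)
qed

text \<open>Since every \<open>A\<^sub>n\<close> is invertible, a solution of the block recurrence is determined by its
  first block, and \<open>P\<close> is the fundamental solution.\<close>
lemma pentadiagonal_eigenseq_eq_P:
  assumes P: "matrix_orth_polys a b c P" and a_pos: "\<And>n. a n > 0"
    and s: "pentadiagonal_eigenseq a b c x s"
  shows "s (2 * n + block_offset i) = P n x $ i $ 1 * s 0 + P n x $ i $ 2 * s 1"
proof -
  let ?S = "block_vec s"
  have step: "?S (Suc n) = P (Suc n) x *v ?S 0"
    if IH0: "?S n = P n x *v ?S 0" and IH1: "n \<ge> 1 \<Longrightarrow> ?S (n - 1) = P (n - 1) x *v ?S 0" for n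
  proof (rule Amat_mult_vec_inj[OF a_pos])
    have "Amat a b n *v ?S (Suc n) = complex_of_real x *s ?S n - Bmat b c n *v ?S n
        - (if n = 0 then 0 else adj2 (Amat a b (n - 1)) *v ?S (n - 1))"
      using pentadiagonal_eigenseq_block_rec[OF s, of n] by (simp add: algebra_simps)
    also have "\<dots> = (x *\<^sub>R P n x - Bmat b c n ** P n x
        - (if n = 0 then 0 else adj2 (Amat a b (n - 1)) ** P (n - 1) x)) *v ?S 0"
      using IH0 IH1 by (simp add: matrix_vector_mult_diff_rdistrib scaleR_matrix_vector_mult2 matrix_vector_mul_assoc)
    also have "\<dots> = Amat a b n *v (P (Suc n) x *v ?S 0)"
      by (simp add: matrix_orth_polys_rec[OF P] matrix_vector_mul_assoc)
    finally show "Amat a b n *v ?S (Suc n) = Amat a b n *v (P (Suc n) x *v ?S 0)" .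
  qed
  have "?S n = P n x *v ?S 0 \<and> ?S (Suc n) = P (Suc n) x *v ?S 0"
  proof (induction n)
    case 0
    have "?S 0 = P 0 x *v ?S 0" using P by (simp add: matrix_orth_polys_def)
    then show ?case using step[of 0] by simp
  next
    case (Suc n)
    then show ?case using step[of "Suc n"] by simp
  qed
  moreover have "i = 1 \<or> i = 2" using exhaust_2 by auto
  ultimately show ?thesis by (auto simp: cvec2_eq_iff)
qed

lemma measurable_vec_nth [measurable (raw)]:
  "f \<in> borel_measurable M \<Longrightarrow> (\<lambda>x. f x $ i) \<in> borel_measurable M"
  by (rule borel_measurable_continuous_on[where f="\<lambda>v. v $ i"])
    (intro continuous_on_component continuous_on_id)

lemma measurable_cnj [measurable (raw)]:
  "f \<in> borel_measurable M \<Longrightarrow> (\<lambda>x. cnj (f x :: complex)) \<in> borel_measurable M"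
  by (rule borel_measurable_continuous_on[where f=cnj]) (intro continuous_on_cnj continuous_on_id)

lemma matrix_orth_polys_Suc_eq:
  assumes P: "matrix_orth_polys a b c P" and a_pos: "\<And>n. a n > 0"
  shows "\<exists>L. \<forall>n x. P (Suc n) x = L n ** (x *\<^sub>R P n x - Bmat b c n ** P n x
           - (if n = 0 then 0 else adj2 (Amat a b (n - 1)) ** P (n - 1) x))"
proof -
  obtain L where L: "\<And>n. L n ** Amat a b n = mat 1"
    using Amat_left_invertible[of a b] a_pos by metis
  have "P (Suc n) x = (L n ** Amat a b n) ** P (Suc n) x" for n x
    by (simp add: L)
  then show ?thesis
    by (auto simp: matrix_mul_assoc matrix_orth_polys_rec[OF P] algebra_simps)
qed

lemma matrix_orth_polys_measurable:
  assumes P: "matrix_orth_polys a b c P" and a_pos: "\<And>n. a n > 0"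
  shows "(\<lambda>x. P k x $ i $ j) \<in> borel_measurable borel"
proof -
  obtain L where P_Suc: "\<And>n x. P (Suc n) x = L n ** (x *\<^sub>R P n x - Bmat b c n ** P n x
      - (if n = 0 then 0 else adj2 (Amat a b (n - 1)) ** P (n - 1) x))"
    using matrix_orth_polys_Suc_eq[OF P a_pos] by blast
  have "(\<forall>i j. (\<lambda>x. P n x $ i $ j) \<in> borel_measurable borel) \<and>
        (\<forall>i j. (\<lambda>x. P (Suc n) x $ i $ j) \<in> borel_measurable borel)" for n
  proof (induction n)
    case 0
    have [measurable]: "(\<lambda>x. P 0 x $ i $ j) \<in> borel_measurable borel" for i j
      using P by (simp add: matrix_orth_polys_def)
    have "(\<lambda>x. P (Suc 0) x $ i $ j) \<in> borel_measurable borel" for i j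
    proof -
      have "P (Suc 0) x = L 0 ** (x *\<^sub>R P 0 x - Bmat b c 0 ** P 0 x)" for x
        using P_Suc[of 0] by simp
      then show ?thesis
        by (simp only: matrix_matrix_mult_nth2 vector_minus_component vector_scaleR_component) measurable
    qed
    then show ?case by simp
  next
    case (Suc n)
    then have [measurable]: "(\<lambda>x. P n x $ i $ j) \<in> borel_measurable borel"
      "(\<lambda>x. P (Suc n) x $ i $ j) \<in> borel_measurable borel" for i j
      by auto
    have "(\<lambda>x. P (Suc (Suc n)) x $ i $ j) \<in> borel_measurable borel" for i j
    proof -
      have "P (Suc (Suc n)) x = L (Suc n) ** (x *\<^sub>R P (Suc n) x - Bmat b c (Suc n) ** P (Suc n) x
          - adj2 (Amat a b n) ** P n x)" for x
        using P_Suc[of "Suc n"] by simp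
      then show ?thesis
        by (simp only: matrix_matrix_mult_nth2 vector_minus_component vector_scaleR_component adj2_nth)
          measurable
    qed
    then show ?case using Suc by simp
  qed
  then show ?thesis by blast
qed

lemma measurable_scaleC_cvec2 [measurable (raw)]:
  "f \<in> borel_measurable M \<Longrightarrow> (\<lambda>x. (c::complex) *s (f x :: cvec2)) \<in> borel_measurable M"
proof (rule borel_measurable_continuous_on[where f="\<lambda>v. c *s v"])
  have "(\<lambda>v. c *s v) = (\<lambda>v::cvec2. \<chi> i. c * v $ i)" by (auto simp: vec_eq_iff)
  then show "continuous_on UNIV (\<lambda>v::cvec2. c *s v)"
    by (simp add: continuous_on_vec_lambda continuous_on_mult continuous_on_component)
qed

lemma measurable_hform [measurable (raw)]:
  assumes [measurable]: "v \<in> borel_measurable M" "A \<in> borel_measurable M" "w \<in> borel_measurable M"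
  shows "(\<lambda>x. hform (v x) (A x) (w x)) \<in> borel_measurable M"
  unfolding hform_expand by measurable

lemma scaleC_zero_left [simp]: "(0::complex) *\<^sub>C x = (0::'a::complex_hilbert)"
proof -
  have "(0::complex) *\<^sub>C x = 0 *\<^sub>C x + 0 *\<^sub>C x"
    using scaleC_add_left[of 0 0 x] by (simp only: add_0_left)
  then show ?thesis by (simp only: add_cancel_right_right)
qed

text \<open>On the \<open>\<rho>\<close>-part, \<open>U x\<close> is determined only modulo \<open>ker V(t)\<close>, so its values are
  observed through the functionals \<open>hform w (V t)\<close>, for all \<open>w\<close> at once; for the
  \<open>\<sigma>\<close>-part the parameter \<open>w\<close> is trivial.\<close>
lemma AE_pentadiagonal_eigenseq:
  fixes T :: "'h::complex_hilbert \<Rightarrow> 'h" and \<Phi> :: "'h \<Rightarrow> real \<Rightarrow> 'w \<Rightarrow> complex"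
  assumes add: "\<And>x y. AE t in M. \<forall>w. \<Phi> (x + y) t w = \<Phi> x t w + \<Phi> y t w"
    and scale: "\<And>c x. AE t in M. \<forall>w. \<Phi> (c *\<^sub>C x) t w = c * \<Phi> x t w"
    and mult: "\<And>k. AE t in M. \<forall>w. \<Phi> (T (f k)) t w = of_real t * \<Phi> (f k) t w"
    and T: "pentadiagonal_action T f a b c"
  shows "AE t in M. \<forall>w. pentadiagonal_eigenseq a b c t (\<lambda>k. \<Phi> (f k) t w)"
proof -
  have row: "AE t in M. \<forall>w. complex_of_real t * \<Phi> (f k) t w =
      of_real (a k) * \<Phi> (f (k + 2)) t w + b k * \<Phi> (f (k + 1)) t w + of_real (c k) * \<Phi> (f k) t w
      + (if k \<ge> 1 then cnj (b (k - 1)) * \<Phi> (f (k - 1)) t w else 0)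
      + (if k \<ge> 2 then of_real (a (k - 2)) * \<Phi> (f (k - 2)) t w else 0)" for k
  proof -
    define d1 where "d1 = (if k \<ge> 1 then cnj (b (k - 1)) else 0)"
    define d2 where "d2 = (if k \<ge> 2 then complex_of_real (a (k - 2)) else 0)"
    define y1 where "y1 = of_real (a k) *\<^sub>C f (k + 2)"
    define y2 where "y2 = b k *\<^sub>C f (k + 1)"
    define y3 where "y3 = of_real (c k) *\<^sub>C f k"
    define y4 where "y4 = d1 *\<^sub>C f (k - 1)"
    define y5 where "y5 = d2 *\<^sub>C f (k - 2)"
    have Tk: "T (f k) = y1 + y2 + y3 + y4 + y5"
      using T unfolding pentadiagonal_action_def y1_def y2_def y3_def y4_def y5_def d1_def d2_def by simp
    have d: "(if k \<ge> 1 then cnj (b (k - 1)) * z1 else 0) = d1 * z1"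
      "(if k \<ge> 2 then of_real (a (k - 2)) * z2 else 0) = d2 * z2" for z1 z2
      unfolding d1_def d2_def by simp_all
    show ?thesis
      unfolding d
      using mult[of k] add[of "y1 + y2 + y3 + y4" y5] add[of "y1 + y2 + y3" y4] add[of "y1 + y2" y3]
        add[of y1 y2] scale[of "of_real (a k)" "f (k + 2)"] scale[of "b k" "f (k + 1)"]
        scale[of "of_real (c k)" "f k"] scale[of d1 "f (k - 1)"] scale[of d2 "f (k - 2)"]
      unfolding Tk y1_def[symmetric] y2_def[symmetric] y3_def[symmetric] y4_def[symmetric] y5_def[symmetric]
      by eventually_elim auto
  qed
  show ?thesis
    unfolding pentadiagonal_eigenseq_def by (subst all_comm, subst AE_all_countable) (use row in blast)
qed

lemma AE_block_expansion:
  fixes T :: "'h::complex_hilbert \<Rightarrow> 'h" and \<Phi> :: "'h \<Rightarrow> real \<Rightarrow> 'w \<Rightarrow> complex"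
  assumes "\<And>x y. AE t in M. \<forall>w. \<Phi> (x + y) t w = \<Phi> x t w + \<Phi> y t w"
    and "\<And>c x. AE t in M. \<forall>w. \<Phi> (c *\<^sub>C x) t w = c * \<Phi> x t w"
    and "\<And>k. AE t in M. \<forall>w. \<Phi> (T (f k)) t w = of_real t * \<Phi> (f k) t w"
    and "pentadiagonal_action T f a b c"
    and P: "matrix_orth_polys a b c P" and a_pos: "\<And>n. a n > 0"
  shows "AE t in M. \<forall>w n i. \<Phi> (f (2 * n + block_offset i)) t w
           = P n t $ i $ 1 * \<Phi> (f 0) t w + P n t $ i $ 2 * \<Phi> (f 1) t w"
  using AE_pentadiagonal_eigenseq[OF assms(1-4)]
  by eventually_elim (use pentadiagonal_eigenseq_eq_P[OF P a_pos] in blast)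

lemma power2_norm_add_le: "(norm (x + y))\<^sup>2 \<le> 2 * (norm x)\<^sup>2 + 2 * (norm (y::'a::real_normed_vector))\<^sup>2"
proof -
  have "(norm (x + y))\<^sup>2 \<le> (norm x + norm y)\<^sup>2" by (simp add: power_mono norm_triangle_ineq)
  also have "\<dots> \<le> 2 * (norm x)\<^sup>2 + 2 * (norm y)\<^sup>2"
    using zero_le_power2[of "norm x - norm y"] by (simp add: power2_eq_square algebra_simps)
  finally show ?thesis .
qed

lemma power2_norm_diff_le: "(norm (x - y))\<^sup>2 \<le> 2 * (norm x)\<^sup>2 + 2 * (norm (y::'a::real_normed_vector))\<^sup>2"
  using power2_norm_add_le[of x "- y"] by simp

locale L2V_space =
  fixes \<sigma> \<rho> :: "real measure" and V :: "real \<Rightarrow> cmat2"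
  assumes V_measurable [measurable]: "V \<in> borel_measurable \<rho>"
    and V_psd: "AE x in \<rho>. psd2 (V x)"
begin

lemma L2V_memD:
  assumes "L2V_mem \<sigma> \<rho> V g"
  shows "fst g \<in> borel_measurable \<sigma>" "integrable \<sigma> (\<lambda>x. (cmod (fst g x))\<^sup>2)"
    "snd g \<in> borel_measurable \<rho>" "integrable \<rho> (\<lambda>x. hform (snd g x) (V x) (snd g x))"
  using assms by (auto simp: L2V_mem_def)

lemma L2V_mem_add_diff:
  assumes g: "L2V_mem \<sigma> \<rho> V g" and h: "L2V_mem \<sigma> \<rho> V h"
  shows "L2V_mem \<sigma> \<rho> V (L2V_add g h)" "L2V_mem \<sigma> \<rho> V (L2V_diff g h)"
proof -
  note gm = L2V_memD[OF g] and hm = L2V_memD[OF h]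
  have [measurable]: "fst g \<in> borel_measurable \<sigma>" "fst h \<in> borel_measurable \<sigma>"
    "snd g \<in> borel_measurable \<rho>" "snd h \<in> borel_measurable \<rho>" using gm hm by auto
  have I: "integrable \<sigma> (\<lambda>x. 2 * (cmod (fst g x))\<^sup>2 + 2 * (cmod (fst h x))\<^sup>2)"
    using gm hm by auto
  have J: "integrable \<rho> (\<lambda>x. 2 * Re (hform (snd g x) (V x) (snd g x)) + 2 * Re (hform (snd h x) (V x) (snd h x)))"
    using gm hm by auto
  have bound: "AE x in \<rho>. norm (hform (u x) (V x) (u x)) \<le>
      norm (2 * Re (hform (snd g x) (V x) (snd g x)) + 2 * Re (hform (snd h x) (V x) (snd h x)))"
    if u: "\<And>x. u x = snd g x + snd h x \<or> u x = snd g x - snd h x" for u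
    using V_psd
  proof eventually_elim
    case (elim x)
    have "norm (hform (u x) (V x) (u x)) \<le> 2 * Re (hform (snd g x) (V x) (snd g x)) + 2 * Re (hform (snd h x) (V x) (snd h x))"
      using u[of x] psd2_hform_add_le[OF elim] by (auto simp: psd2_norm_hform_self[OF elim])
    then show ?case by simp
  qed
  show "L2V_mem \<sigma> \<rho> V (L2V_add g h)"
    unfolding L2V_mem_def L2V_add_def fst_conv snd_conv
  proof (intro conjI)
    show "integrable \<sigma> (\<lambda>x. (cmod (fst g x + fst h x))\<^sup>2)"
      by (rule Bochner_Integration.integrable_bound[OF I], measurable, rule AE_I2)
        (simp add: power2_norm_add_le)
    show "integrable \<rho> (\<lambda>x. hform (snd g x + snd h x) (V x) (snd g x + snd h x))"
      by (rule Bochner_Integration.integrable_bound[OF J], measurable, rule bound) simp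
  qed measurable
  show "L2V_mem \<sigma> \<rho> V (L2V_diff g h)"
    unfolding L2V_mem_def L2V_diff_def fst_conv snd_conv
  proof (intro conjI)
    show "integrable \<sigma> (\<lambda>x. (cmod (fst g x - fst h x))\<^sup>2)"
      by (rule Bochner_Integration.integrable_bound[OF I], measurable, rule AE_I2)
        (simp add: power2_norm_diff_le)
    show "integrable \<rho> (\<lambda>x. hform (snd g x - snd h x) (V x) (snd g x - snd h x))"
      by (rule Bochner_Integration.integrable_bound[OF J], measurable, rule bound) simp
  qed measurable
qed

lemma L2V_mem_scale:
  assumes g: "L2V_mem \<sigma> \<rho> V g" shows "L2V_mem \<sigma> \<rho> V (L2V_scale c g)"
proof -
  note gm = L2V_memD[OF g]
  have [measurable]: "fst g \<in> borel_measurable \<sigma>" "snd g \<in> borel_measurable \<rho>" using gm by auto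
  have "(\<lambda>x. (cmod (c * fst g x))\<^sup>2) = (\<lambda>x. (cmod c)\<^sup>2 * (cmod (fst g x))\<^sup>2)"
    by (simp add: norm_mult power_mult_distrib)
  moreover have "(\<lambda>x. hform (c *s snd g x) (V x) (c *s snd g x)) =
      (\<lambda>x. (cnj c * c) * hform (snd g x) (V x) (snd g x))"
    by (simp add: hform_linear_simps algebra_simps)
  ultimately show ?thesis
    using gm unfolding L2V_mem_def L2V_scale_def fst_conv snd_conv by simp
qed

lemma L2V_inner_self_eq_0_AE:
  assumes d: "L2V_mem \<sigma> \<rho> V d" and z: "L2V_inner \<sigma> \<rho> V d d = 0"
  shows "AE x in \<sigma>. fst d x = 0"
    and "AE x in \<rho>. \<forall>w. hform w (V x) (snd d x) = 0"
proof -
  note d_mem = L2V_memD[OF d]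
  have [measurable]: "fst d \<in> borel_measurable \<sigma>" "snd d \<in> borel_measurable \<rho>" using d_mem by auto
  let ?X = "\<integral>x. (cmod (fst d x))\<^sup>2 \<partial>\<sigma>"
  let ?Y = "\<integral>x. Re (hform (snd d x) (V x) (snd d x)) \<partial>\<rho>"
  have "(\<integral>x. fst d x * cnj (fst d x) \<partial>\<sigma>) = of_real ?X"
  proof -
    have "\<And>x. fst d x * cnj (fst d x) = complex_of_real ((cmod (fst d x))\<^sup>2)"
      by (simp only: complex_norm_square)
    then show ?thesis by (simp only: integral_complex_of_real)
  qed
  moreover have "(\<integral>x. hform (snd d x) (V x) (snd d x) \<partial>\<rho>) = of_real ?Y"
  proof -
    have "(\<integral>x. hform (snd d x) (V x) (snd d x) \<partial>\<rho>) =
        (\<integral>x. complex_of_real (Re (hform (snd d x) (V x) (snd d x))) \<partial>\<rho>)"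
      by (rule integral_cong_AE) (measurable, use V_psd in eventually_elim, rule psd2_hform_real)
    then show ?thesis by simp
  qed
  ultimately have "of_real ?X + of_real ?Y = (0::complex)"
    using z unfolding L2V_inner_def by simp
  then have sum_0: "?X + ?Y = 0" by (simp only: of_real_add[symmetric] of_real_eq_0_iff)
  have Y_nonneg: "?Y \<ge> 0"
    by (rule integral_nonneg_AE) (use V_psd in eventually_elim, rule psd2_hform_nonneg)
  have X_nonneg: "?X \<ge> 0" by simp
  have "?X = 0" using sum_0 X_nonneg Y_nonneg by linarith
  then have "AE x in \<sigma>. (cmod (fst d x))\<^sup>2 = 0"
    using integral_nonneg_eq_0_iff_AE[of \<sigma> "\<lambda>x. (cmod (fst d x))\<^sup>2"] d_mem by simp
  then show "AE x in \<sigma>. fst d x = 0" by simp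
  have "?Y = 0" using sum_0 X_nonneg Y_nonneg by linarith
  then have "AE x in \<rho>. Re (hform (snd d x) (V x) (snd d x)) = 0"
    using integral_nonneg_eq_0_iff_AE[of \<rho> "\<lambda>x. Re (hform (snd d x) (V x) (snd d x))"] d_mem
    by (simp add: AE_mp[OF V_psd AE_I2] psd2_hform_nonneg)
  then show "AE x in \<rho>. \<forall>w. hform w (V x) (snd d x) = 0"
    using V_psd
  proof eventually_elim
    case (elim x)
    then have "hform (snd d x) (V x) (snd d x) = 0" by (subst psd2_hform_real) simp_all
    then show ?case by (blast intro: psd2_hform_eq_0[OF elim(2)])
  qed
qed

text \<open>Equality in \<open>L\<^sup>2(\<V>)\<close> is pointwise equality \<open>\<sigma>\<close>-a.e. on the scalar part, but on the
  vector part only equality modulo the kernel of \<open>V(x)\<close>, i.e. as functionals \<open>hform w (V x)\<close>.\<close>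
lemma L2V_eq_AE:
  assumes g: "L2V_mem \<sigma> \<rho> V g" and h: "L2V_mem \<sigma> \<rho> V h" and eq: "L2V_eq \<sigma> \<rho> V g h"
  shows "AE x in \<sigma>. fst g x = fst h x"
    and "AE x in \<rho>. \<forall>w. hform w (V x) (snd g x) = hform w (V x) (snd h x)"
proof -
  note diff_0 = L2V_inner_self_eq_0_AE[OF L2V_mem_add_diff(2)[OF g h] eq[unfolded L2V_eq_def]]
  show "AE x in \<sigma>. fst g x = fst h x"
    using diff_0(1) by eventually_elim (simp add: L2V_diff_def)
  show "AE x in \<rho>. \<forall>w. hform w (V x) (snd g x) = hform w (V x) (snd h x)"
    using diff_0(2) by eventually_elim (simp add: L2V_diff_def hform_diff_right)
qed

lemma L2V_inner_integrable:
  assumes g: "L2V_mem \<sigma> \<rho> V g" and h: "L2V_mem \<sigma> \<rho> V h"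
  shows "integrable \<sigma> (\<lambda>x. fst g x * cnj (fst h x))"
    and "integrable \<rho> (\<lambda>x. hform (snd h x) (V x) (snd g x))"
proof -
  note gm = L2V_memD[OF g] and hm = L2V_memD[OF h]
  have [measurable]: "fst g \<in> borel_measurable \<sigma>" "fst h \<in> borel_measurable \<sigma>"
    "snd g \<in> borel_measurable \<rho>" "snd h \<in> borel_measurable \<rho>" using gm hm by auto
  have I: "integrable \<sigma> (\<lambda>x. (cmod (fst g x))\<^sup>2 + (cmod (fst h x))\<^sup>2)" using gm hm by auto
  show "integrable \<sigma> (\<lambda>x. fst g x * cnj (fst h x))"
  proof (rule Bochner_Integration.integrable_bound[OF I], measurable, rule AE_I2)
    fix x
    have "2 * (cmod (fst g x) * cmod (fst h x)) \<le> (cmod (fst g x))\<^sup>2 + (cmod (fst h x))\<^sup>2"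
      using zero_le_power2[of "cmod (fst g x) - cmod (fst h x)"] by (simp add: power2_eq_square algebra_simps)
    moreover have "0 \<le> cmod (fst g x) * cmod (fst h x)" by simp
    ultimately have "cmod (fst g x) * cmod (fst h x) \<le> (cmod (fst g x))\<^sup>2 + (cmod (fst h x))\<^sup>2"
      by linarith
    then show "norm (fst g x * cnj (fst h x)) \<le> norm ((cmod (fst g x))\<^sup>2 + (cmod (fst h x))\<^sup>2)"
      by (simp add: norm_mult)
  qed
  have J: "integrable \<rho> (\<lambda>x. 2 * Re (hform (snd g x) (V x) (snd g x)) + 2 * Re (hform (snd h x) (V x) (snd h x)))"
    using gm hm by auto
  show "integrable \<rho> (\<lambda>x. hform (snd h x) (V x) (snd g x))"
  proof (rule Bochner_Integration.integrable_bound[OF J], measurable)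
    show "AE x in \<rho>. norm (hform (snd h x) (V x) (snd g x))
        \<le> norm (2 * Re (hform (snd g x) (V x) (snd g x)) + 2 * Re (hform (snd h x) (V x) (snd h x)))"
      using V_psd by eventually_elim (rule order_trans[OF psd2_norm_hform_le], simp_all)
  qed
qed

end

lemma gram_sandwich_nth_scalar:
  fixes Pn Pm :: cmat2
  assumes "gk = Pn$i$1 * g0 + Pn$i$2 * g1" and "gl = Pm$j$1 * g0 + Pm$j$2 * g1"
  shows "(Pn ** mk2 ((cmod g0)\<^sup>2) (g0 * cnj g1) (cnj g0 * g1) ((cmod g1)\<^sup>2) ** adj2 Pm) $ i $ j = gk * cnj gl"
proof -
  have "mk2 ((cmod g0)\<^sup>2) (g0 * cnj g1) (cnj g0 * g1) ((cmod g1)\<^sup>2) =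
      mk2 (g0 * cnj g0) (g0 * cnj g1) (cnj g0 * g1) (g1 * cnj g1)"
    by (simp only: complex_norm_square[symmetric] of_real_power)
  then show ?thesis unfolding assms by (simp add: algebra_simps)
qed

lemma gram_sandwich_nth_hform:
  fixes Pn Pm :: cmat2
  assumes A: "psd2 A"
    and vk: "\<And>w. hform w A vk = Pn$i$1 * hform w A v0 + Pn$i$2 * hform w A v1"
    and vl: "\<And>w. hform w A vl = Pm$j$1 * hform w A v0 + Pm$j$2 * hform w A v1"
  shows "(Pn ** mk2 (hform v0 A v0) (hform v1 A v0) (hform v0 A v1) (hform v1 A v1) ** adj2 Pm) $ i $ j
    = hform vl A vk"
proof -
  have "hform vl A v = cnj (Pm$j$1) * hform v0 A v + cnj (Pm$j$2) * hform v1 A v" for v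
    using vl[of v] psd2_hform_commute[OF A, of _ v] by (metis complex_cnj_add complex_cnj_mult complex_cnj_cnj)
  then have "hform vl A vk = Pn$i$1 * (cnj (Pm$j$1) * hform v0 A v0 + cnj (Pm$j$2) * hform v1 A v0)
      + Pn$i$2 * (cnj (Pm$j$1) * hform v0 A v1 + cnj (Pm$j$2) * hform v1 A v1)"
    using vk[of vl] by simp
  then show ?thesis by (simp add: algebra_simps)
qed

locale block_jacobi_model = L2V_space \<sigma> \<rho> V
  for \<sigma> \<rho> :: "real measure" and V :: "real \<Rightarrow> cmat2" +
  fixes U :: "'h::complex_hilbert \<Rightarrow> l2v" and T :: "'h \<Rightarrow> 'h" and D :: "'h set" and f :: "nat \<Rightarrow> 'h"
    and a :: "nat \<Rightarrow> real" and b :: "nat \<Rightarrow> complex" and c :: "nat \<Rightarrow> real"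
    and P :: "nat \<Rightarrow> real \<Rightarrow> cmat2"
  assumes U_unitary: "unitary_to_L2V \<sigma> \<rho> V U"
    and UT_MU: "intertwines \<sigma> \<rho> V U T D"
    and f_in_D: "\<And>n. f n \<in> D"
    and onb: "orthonormal_basis f"
    and T_action: "pentadiagonal_action T f a b c"
    and a_pos: "\<And>n. a n > 0"
    and P: "matrix_orth_polys a b c P"
    and sets_\<sigma>: "sets \<sigma> = sets (restrict_space borel (space \<sigma>))"
    and sets_\<rho>: "sets \<rho> = sets (restrict_space borel (space \<rho>))"
begin

definition W\<^sub>\<sigma> :: "real \<Rightarrow> cmat2" where
  "W\<^sub>\<sigma> x = mk2 ((cmod (fst (U (f 0)) x))\<^sup>2) (fst (U (f 0)) x * cnj (fst (U (f 1)) x))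
      (cnj (fst (U (f 0)) x) * fst (U (f 1)) x) ((cmod (fst (U (f 1)) x))\<^sup>2)"

definition W\<^sub>\<rho> :: "real \<Rightarrow> cmat2" where
  "W\<^sub>\<rho> x = mk2 (hform (snd (U (f 0)) x) (V x) (snd (U (f 0)) x))
      (hform (snd (U (f 1)) x) (V x) (snd (U (f 0)) x))
      (hform (snd (U (f 0)) x) (V x) (snd (U (f 1)) x))
      (hform (snd (U (f 1)) x) (V x) (snd (U (f 1)) x))"

lemma U_mem: "L2V_mem \<sigma> \<rho> V (U x)"
  and U_inner: "L2V_inner \<sigma> \<rho> V (U x) (U y) = cinner x y"
  using U_unitary by (simp_all add: unitary_to_L2V_def)

lemma U_measurable [measurable]:
  "fst (U x) \<in> borel_measurable \<sigma>" "snd (U x) \<in> borel_measurable \<rho>"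
  using L2V_memD[OF U_mem] by blast+

lemma P_nth_measurable [measurable]:
  "(\<lambda>t. P k t $ i $ j) \<in> borel_measurable \<sigma>" "(\<lambda>t. P k t $ i $ j) \<in> borel_measurable \<rho>"
  using measurable_restrict_space1[OF matrix_orth_polys_measurable[OF P a_pos]]
  by (simp_all add: measurable_cong_sets[OF sets_\<sigma> refl] measurable_cong_sets[OF sets_\<rho> refl])

lemma U_add_AE:
  "AE t in \<sigma>. fst (U (x + y)) t = fst (U x) t + fst (U y) t"
  "AE t in \<rho>. \<forall>w. hform w (V t) (snd (U (x + y)) t) = hform w (V t) (snd (U x) t) + hform w (V t) (snd (U y) t)"
  using L2V_eq_AE[OF U_mem L2V_mem_add_diff(1)[OF U_mem U_mem]] U_unitary
  by (auto simp: unitary_to_L2V_def L2V_add_def hform_add_right)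

lemma U_scale_AE:
  "AE t in \<sigma>. fst (U (z *\<^sub>C x)) t = z * fst (U x) t"
  "AE t in \<rho>. \<forall>w. hform w (V t) (snd (U (z *\<^sub>C x)) t) = z * hform w (V t) (snd (U x) t)"
  using L2V_eq_AE[OF U_mem L2V_mem_scale[OF U_mem]] U_unitary
  by (auto simp: unitary_to_L2V_def L2V_scale_def hform_scale_right)

lemma U_T_AE:
  "AE t in \<sigma>. fst (U (T (f k))) t = of_real t * fst (U (f k)) t"
  "AE t in \<rho>. \<forall>w. hform w (V t) (snd (U (T (f k))) t) = of_real t * hform w (V t) (snd (U (f k)) t)"
proof -
  have mem: "L2V_mem \<sigma> \<rho> V (L2V_mult (U (f k)))"
    and eq: "L2V_eq \<sigma> \<rho> V (U (T (f k))) (L2V_mult (U (f k)))"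
    using UT_MU f_in_D[of k] by (auto simp: intertwines_def)
  show "AE t in \<sigma>. fst (U (T (f k))) t = of_real t * fst (U (f k)) t"
    using L2V_eq_AE(1)[OF U_mem mem eq] by (simp add: L2V_mult_def)
  show "AE t in \<rho>. \<forall>w. hform w (V t) (snd (U (T (f k))) t) = of_real t * hform w (V t) (snd (U (f k)) t)"
    using L2V_eq_AE(2)[OF U_mem mem eq] by (simp add: L2V_mult_def hform_scale_right)
qed

lemma fst_U_block_expansion:
  "AE t in \<sigma>. \<forall>n i. fst (U (f (2 * n + block_offset i))) t
     = P n t $ i $ 1 * fst (U (f 0)) t + P n t $ i $ 2 * fst (U (f 1)) t"
proof -
  have "AE t in \<sigma>. \<forall>(w::unit) n i. fst (U (f (2 * n + block_offset i))) t
     = P n t $ i $ 1 * fst (U (f 0)) t + P n t $ i $ 2 * fst (U (f 1)) t"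
    by (rule AE_block_expansion[where \<Phi>="\<lambda>x t w. fst (U x) t", OF _ _ _ T_action P a_pos])
      (use U_add_AE(1) U_scale_AE(1) U_T_AE(1) in simp_all)
  then show ?thesis by simp
qed

lemma snd_U_block_expansion:
  "AE t in \<rho>. \<forall>w n i. hform w (V t) (snd (U (f (2 * n + block_offset i))) t)
     = P n t $ i $ 1 * hform w (V t) (snd (U (f 0)) t) + P n t $ i $ 2 * hform w (V t) (snd (U (f 1)) t)"
  by (rule AE_block_expansion[where \<Phi>="\<lambda>x t w. hform w (V t) (snd (U x) t)", OF _ _ _ T_action P a_pos])
    (fact U_add_AE(2) U_scale_AE(2) U_T_AE(2))+

lemma block_entry_AE:
  "AE t in \<sigma>. (P n t ** W\<^sub>\<sigma> t ** adj2 (P m t)) $ i $ j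
     = fst (U (f (2 * n + block_offset i))) t * cnj (fst (U (f (2 * m + block_offset j))) t)"
  "AE t in \<rho>. (P n t ** W\<^sub>\<rho> t ** adj2 (P m t)) $ i $ j
     = hform (snd (U (f (2 * m + block_offset j))) t) (V t) (snd (U (f (2 * n + block_offset i))) t)"
proof -
  show "AE t in \<sigma>. (P n t ** W\<^sub>\<sigma> t ** adj2 (P m t)) $ i $ j
     = fst (U (f (2 * n + block_offset i))) t * cnj (fst (U (f (2 * m + block_offset j))) t)"
    using fst_U_block_expansion
  proof eventually_elim
    case (elim t)
    show ?case unfolding W\<^sub>\<sigma>_def by (rule gram_sandwich_nth_scalar[OF elim[rule_format] elim[rule_format]])
  qed
  show "AE t in \<rho>. (P n t ** W\<^sub>\<rho> t ** adj2 (P m t)) $ i $ j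
     = hform (snd (U (f (2 * m + block_offset j))) t) (V t) (snd (U (f (2 * n + block_offset i))) t)"
    using snd_U_block_expansion V_psd
  proof eventually_elim
    case (elim t)
    show ?case unfolding W\<^sub>\<rho>_def
      by (rule gram_sandwich_nth_hform[OF elim(2) elim(1)[rule_format] elim(1)[rule_format]])
  qed
qed

lemma block_entry_integrable:
  "integrable \<sigma> (\<lambda>t. (P n t ** W\<^sub>\<sigma> t ** adj2 (P m t)) $ i $ j)"
  "integrable \<rho> (\<lambda>t. (P n t ** W\<^sub>\<rho> t ** adj2 (P m t)) $ i $ j)"
  and block_entry_integral_sum:
  "(\<integral>t. (P n t ** W\<^sub>\<sigma> t ** adj2 (P m t)) $ i $ j \<partial>\<sigma>) + (\<integral>t. (P n t ** W\<^sub>\<rho> t ** adj2 (P m t)) $ i $ j \<partial>\<rho>)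
     = cinner (f (2 * n + block_offset i)) (f (2 * m + block_offset j))"
proof -
  let ?k = "2 * n + block_offset i" and ?l = "2 * m + block_offset j"
  have meas_\<sigma> [measurable]: "(\<lambda>t. (P n t ** W\<^sub>\<sigma> t ** adj2 (P m t)) $ i $ j) \<in> borel_measurable \<sigma>"
    unfolding W\<^sub>\<sigma>_def by (simp only: matrix_matrix_mult_nth2 adj2_nth mk2_nth) measurable
  have meas_\<rho> [measurable]: "(\<lambda>t. (P n t ** W\<^sub>\<rho> t ** adj2 (P m t)) $ i $ j) \<in> borel_measurable \<rho>"
    unfolding W\<^sub>\<rho>_def by (simp only: matrix_matrix_mult_nth2 adj2_nth mk2_nth) measurable
  note inner_integrable = L2V_inner_integrable[OF U_mem[of "f ?k"] U_mem[of "f ?l"]]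
  show "integrable \<sigma> (\<lambda>t. (P n t ** W\<^sub>\<sigma> t ** adj2 (P m t)) $ i $ j)"
    by (rule integrable_cong_AE_imp[OF inner_integrable(1) meas_\<sigma>])
      (rule AE_symmetric[OF block_entry_AE(1)])
  show "integrable \<rho> (\<lambda>t. (P n t ** W\<^sub>\<rho> t ** adj2 (P m t)) $ i $ j)"
    by (rule integrable_cong_AE_imp[OF inner_integrable(2) meas_\<rho>])
      (rule AE_symmetric[OF block_entry_AE(2)])
  have "(\<integral>t. (P n t ** W\<^sub>\<sigma> t ** adj2 (P m t)) $ i $ j \<partial>\<sigma>) = (\<integral>t. fst (U (f ?k)) t * cnj (fst (U (f ?l)) t) \<partial>\<sigma>)"
    by (rule integral_cong_AE) (measurable, rule block_entry_AE(1))
  moreover have "(\<integral>t. (P n t ** W\<^sub>\<rho> t ** adj2 (P m t)) $ i $ j \<partial>\<rho>)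
      = (\<integral>t. hform (snd (U (f ?l)) t) (V t) (snd (U (f ?k)) t) \<partial>\<rho>)"
    by (rule integral_cong_AE) (measurable, rule block_entry_AE(2))
  ultimately show "(\<integral>t. (P n t ** W\<^sub>\<sigma> t ** adj2 (P m t)) $ i $ j \<partial>\<sigma>) + (\<integral>t. (P n t ** W\<^sub>\<rho> t ** adj2 (P m t)) $ i $ j \<partial>\<rho>)
      = cinner (f ?k) (f ?l)"
    by (simp add: L2V_inner_def flip: U_inner)
qed

theorem matrix_orth_polys_orthonormal:
  "integrable \<sigma> (\<lambda>x. P n x ** W\<^sub>\<sigma> x ** adj2 (P m x))
   \<and> integrable \<rho> (\<lambda>x. P n x ** W\<^sub>\<rho> x ** adj2 (P m x))
   \<and> (\<integral>x. P n x ** W\<^sub>\<sigma> x ** adj2 (P m x) \<partial>\<sigma>) + (\<integral>x. P n x ** W\<^sub>\<rho> x ** adj2 (P m x) \<partial>\<rho>)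
       = (if n = m then mat 1 else 0)"
proof (intro conjI)
  show int_\<sigma>: "integrable \<sigma> (\<lambda>x. P n x ** W\<^sub>\<sigma> x ** adj2 (P m x))"
    and int_\<rho>: "integrable \<rho> (\<lambda>x. P n x ** W\<^sub>\<rho> x ** adj2 (P m x))"
    by (intro integrable_vec_componentwise block_entry_integrable)+
  have "((\<integral>x. P n x ** W\<^sub>\<sigma> x ** adj2 (P m x) \<partial>\<sigma>) + (\<integral>x. P n x ** W\<^sub>\<rho> x ** adj2 (P m x) \<partial>\<rho>)) $ i $ j
      = (if n = m \<and> i = j then 1 else 0)" for i j
    using block_entry_integral_sum[of n m] onb
    by (simp add: integral_vec_nth_nth int_\<sigma> int_\<rho> orthonormal_basis_def block_index_eq_iff)
  then show "(\<integral>x. P n x ** W\<^sub>\<sigma> x ** adj2 (P m x) \<partial>\<sigma>) + (\<integral>x. P n x ** W\<^sub>\<rho> x ** adj2 (P m x) \<partial>\<rho>)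
      = (if n = m then mat 1 else 0)"
    by (simp add: cmat2_eq_iff)
qed

end

theorem theorem6p3:
  fixes T :: "'h::complex_hilbert \<Rightarrow> 'h" and D :: "'h set"
    and f :: "nat \<Rightarrow> 'h"
    and a :: "nat \<Rightarrow> real" and b :: "nat \<Rightarrow> complex" and c :: "nat \<Rightarrow> real"
    and \<Omega>1 \<Omega>2 :: "real set" and \<sigma> \<rho> :: "real measure"
    and V :: "real \<Rightarrow> cmat2" and U :: "'h \<Rightarrow> l2v"
    and P :: "nat \<Rightarrow> real \<Rightarrow> cmat2"
  assumes sa: "self_adjoint T D"
    and onb: "orthonormal_basis f"
    and fD: "\<And>n. f n \<in> D"
    and a_pos: "\<And>n. a n > 0"
    and rec: "\<And>n. T (f n) =
         of_real (a n) *\<^sub>C f (n + 2) + b n *\<^sub>C f (n + 1) + of_real (c n) *\<^sub>C f n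
         + (if n \<ge> 1 then cnj (b (n - 1)) *\<^sub>C f (n - 1) else 0)
         + (if n \<ge> 2 then of_real (a (n - 2)) *\<^sub>C f (n - 2) else 0)"
    and spec: "op_spectrum T D = complex_of_real ` (\<Omega>1 \<union> \<Omega>2)"
    and disj: "\<Omega>1 \<inter> \<Omega>2 = {}"
    and \<Omega>1_borel: "\<Omega>1 \<in> sets borel" and \<Omega>2_borel: "\<Omega>2 \<in> sets borel"
    and \<sigma>_space: "space \<sigma> = \<Omega>1" and \<sigma>_sets: "sets \<sigma> = sets (restrict_space borel \<Omega>1)"
    and \<rho>_space: "space \<rho> = \<Omega>2" and \<rho>_sets: "sets \<rho> = sets (restrict_space borel \<Omega>2)"
    and V_meas: "V \<in> borel_measurable \<rho>"
    and V_psd: "AE x in \<rho>. psd2 (V x)"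
    and U_unitary: "unitary_to_L2V \<sigma> \<rho> V U"
    and UT_MU: "intertwines \<sigma> \<rho> V U T D"
    and P_def: "matrix_orth_polys a b c P"
  defines "W1 \<equiv> \<lambda>x. mk2 ((cmod (fst (U (f 0)) x))\<^sup>2) (fst (U (f 0)) x * cnj (fst (U (f 1)) x))
                        (cnj (fst (U (f 0)) x) * fst (U (f 1)) x) ((cmod (fst (U (f 1)) x))\<^sup>2)"
    and "W2 \<equiv> \<lambda>x. mk2 (hform (snd (U (f 0)) x) (V x) (snd (U (f 0)) x))
                       (hform (snd (U (f 1)) x) (V x) (snd (U (f 0)) x))
                       (hform (snd (U (f 0)) x) (V x) (snd (U (f 1)) x))
                       (hform (snd (U (f 1)) x) (V x) (snd (U (f 1)) x))"
  shows "integrable \<sigma> (\<lambda>x. P n x ** W1 x ** adj2 (P m x))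
       \<and> integrable \<rho> (\<lambda>x. P n x ** W2 x ** adj2 (P m x))
       \<and> (\<integral>x. P n x ** W1 x ** adj2 (P m x) \<partial>\<sigma>) + (\<integral>x. P n x ** W2 x ** adj2 (P m x) \<partial>\<rho>)
           = (if n = m then mat 1 else 0)"
proof -
  interpret block_jacobi_model \<sigma> \<rho> V U T D f a b c P
    using V_meas V_psd U_unitary UT_MU fD onb a_pos P_def rec \<sigma>_space \<sigma>_sets \<rho>_space \<rho>_sets
    by unfold_locales (simp_all add: pentadiagonal_action_def)
  have "W1 = W\<^sub>\<sigma>" "W2 = W\<^sub>\<rho>"
    by (simp_all add: fun_eq_iff W1_def W2_def W\<^sub>\<sigma>_def W\<^sub>\<rho>_def)
  then show ?thesis using matrix_orth_polys_orthonormal by simp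
qed

end
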